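(* In the setting of the context, let \[ I(t)=N-\tilde S e^{(\beta/\gamma)\tilde R}\varphi^{-1}(t)+\frac{\gamma}{\beta}\log\varphi^{-1}(t)-\tilde E e^{-\delta t}-\tilde S e^{(\beta/\gamma)\tilde R}e^{-\delta t}\int_{\varphi^{-1}(t)}^{u_0}e^{\delta\varphi(v)}dv\qquad(t\ge0). \] Then $I(\infty):=\lim_{t\to\infty}I(t)=0$, $I(t)>0$ on $[0,\infty)$, and $I$ attains its maximum $\max_{t\ge0}I(t)$ at some $t=T_2\in\{T: I'(T)=0\}$, where for $T>0$ \[ I'(T)=-\frac{\gamma+\delta}{\beta}\psi\bigl(\varphi^{-1}(T)\bigr)+\delta\Bigl(N-\tilde S e^{(\beta/\gamma)\tilde R}\varphi^{-1}(T)+\frac{\gamma}{\beta}\log\varphi^{-1}(T)\Bigr). \]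
   Context: Let $\beta,\gamma,\delta>0$ be constants and $\tilde S,\tilde E,\tilde I,\tilde R$ real numbers with $N:=\tilde S+\tilde E+\tilde I+\tilde R>0$. Standing assumptions: (A1) $\tilde I>0$; (A2) $\tilde E>(\gamma/\delta)\tilde I$; (A3) $\tilde S>\delta\tilde E/(\beta\tilde I)$; (A4) $\tilde R\ge 0$ and $N>\tilde S e^{(\beta/\gamma)\tilde R}+\tilde R$. Let $\alpha$ be the unique solution in $(\tilde R,N)$ of $x=N-\tilde S e^{(\beta/\gamma)\tilde R}e^{-(\beta/\gamma)x}$, and assume (A5) $\tilde S<(\gamma/\beta)e^{(\beta/\gamma)(\alpha-\tilde R)}$. Put $u_0:=e^{-(\beta/\gamma)\tilde R}$, $u_\infty:=e^{-(\beta/\gamma)\alpha}$. Let $\psi$ be the unique function, continuous and positive on $(u_\infty,u_0]$ and $C^1$ on $(u_\infty,u_0)$, satisfying $\psi'(u)\psi(u)-\frac{\gamma+\delta}{u}\psi(u)=-\delta\,\frac{\beta N-\beta\tilde S e^{(\beta/\gamma)\tilde R}u+\gamma\log u}{u}$ on $(u_\infty,u_0)$ and $\psi(u_0)=\beta\tilde I$. Let $\varphi(u):=\int_u^{u_0}\frac{d\xi}{\xi\psi(\xi)}$; $\varphi$ is a strictly decreasing continuous bijection from $(u_\infty,u_0]$ onto $[0,\infty)$, $C^1$ on $(u_\infty,u_0)$, with inverse $\varphi^{-1}:[0,\infty)\to(u_\infty,u_0]$. *)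

theory Defs
  imports "HOL-Analysis.Analysis"
begin

definition phiF :: "(real \<Rightarrow> real) \<Rightarrow> real \<Rightarrow> real \<Rightarrow> real" where
  "phiF \<psi> u0 u = integral {u..u0} (\<lambda>\<xi>. 1 / (\<xi> * \<psi> \<xi>))"

text \<open>inverse of varphi, as a map from [0,oo) to (u_inf, u0]\<close>
definition phiInv :: "(real \<Rightarrow> real) \<Rightarrow> real \<Rightarrow> real \<Rightarrow> real \<Rightarrow> real" where
  "phiInv \<psi> uinf u0 t = inv_into {uinf<..u0} (phiF \<psi> u0) t"

definition Ifun :: "real \<Rightarrow> real \<Rightarrow> real \<Rightarrow> real \<Rightarrow> real \<Rightarrow> real \<Rightarrow> real \<Rightarrow>
    (real \<Rightarrow> real) \<Rightarrow> real \<Rightarrow> real \<Rightarrow> real \<Rightarrow> real" where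
  "Ifun \<beta> \<gamma> \<delta> S E R N \<psi> uinf u0 t =
     N - S * exp ((\<beta>/\<gamma>) * R) * phiInv \<psi> uinf u0 t
       + (\<gamma>/\<beta>) * ln (phiInv \<psi> uinf u0 t)
       - E * exp (- \<delta> * t)
       - S * exp ((\<beta>/\<gamma>) * R) * exp (- \<delta> * t)
           * integral {phiInv \<psi> uinf u0 t..u0} (\<lambda>v. exp (\<delta> * phiF \<psi> u0 v))"

end

(* Let F u = N - C u + (gamma/beta) ln u with C = S exp ((beta/gamma) R), so that F u0 = E + I
   and F uinf = 0.  A comparison argument in the equation for psi gives psi < beta F, and
   concavity of F gives F u <= F'(uinf) (u - uinf); hence psi u = O(u - uinf), so 1/(xi psi xi)
   is not integrable at uinf and phi is a decreasing bijection from (uinf, u0] onto [0, oo),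
   whose inverse P satisfies P' = - P psi(P) and P t --> uinf.  Differentiating the formula
   for I(t) shows that I and psi(P)/beta solve the same linear equation
   y' = -(gamma/beta) psi(P) + delta (F(P) - y) with y 0 = I, so I(t) = psi(P t)/beta.
   Finally I'(0+) = delta E - gamma I > 0, so the maximum of I is attained at some T2 > 0,
   where I' vanishes. *)
theory Submission
  imports Defs
begin

lemma has_real_derivative_integral_lower:
  fixes g :: "real \<Rightarrow> real"
  assumes "continuous_on {a..b} g" "a < x" "x < b"
  shows "((\<lambda>y. integral {y..b} g) has_real_derivative - g x) (at x)"
proof -
  have "at x within {a..b} = at x"
    using assms(2,3) by (intro at_within_interior) simp
  then show ?thesis
    using integral_has_real_derivative'[OF assms(1), of x] assms(2,3) by simp
qed

lemma integral_unbounded_if_ge_reciprocal: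
  fixes g :: "real \<Rightarrow> real"
  assumes lr: "l < r" and c: "0 < c"
    and cont: "\<And>a. l < a \<Longrightarrow> continuous_on {a..r} g"
    and ge: "\<And>x. l < x \<Longrightarrow> x \<le> r \<Longrightarrow> c / (x - l) \<le> g x"
  shows "\<exists>a\<in>{l<..r}. t \<le> integral {a..r} g"
proof -
  define s where "s = max t 0"
  define a where "a = l + (r - l) * exp (- s / c)"
  have "exp (- s / c) \<le> 1"
    using c by (simp add: s_def)
  then have "(r - l) * exp (- s / c) \<le> r - l"
    using lr by (intro mult_left_le) simp_all
  moreover have "0 < (r - l) * exp (- s / c)"
    using lr by simp
  ultimately have a: "l < a" "a \<le> r"
    unfolding a_def by linarith+
  have "((\<lambda>x. c / (x - l)) has_integral (c * ln (r - l) - c * ln (a - l))) {a..r}"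
  proof (rule fundamental_theorem_of_calculus[OF a(2)])
    fix x assume "x \<in> {a..r}"
    then have "0 < x - l" using a by auto
    then have "((\<lambda>x. c * ln (x - l)) has_real_derivative c * (1 / (x - l))) (at x)"
      by (auto intro!: derivative_eq_intros)
    then show "((\<lambda>x. c * ln (x - l)) has_vector_derivative c / (x - l)) (at x within {a..r})"
      by (simp add: has_real_derivative_iff_has_vector_derivative[symmetric] has_field_derivative_at_within)
  qed
  moreover have "g integrable_on {a..r}"
    using cont[OF a(1)] by (rule integrable_continuous_interval)
  ultimately have "c * ln (r - l) - c * ln (a - l) \<le> integral {a..r} g"
    using ge a by (intro has_integral_le[OF _ integrable_integral]) auto
  moreover have "c * ln (r - l) - c * ln (a - l) = s"
    using lr c by (simp add: a_def ln_mult right_diff_distrib)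
  ultimately show ?thesis
    using a by (intro bexI[of _ a]) (auto simp: s_def)
qed

lemma pos_if_deriv_neg_where_nonpos:
  fixes f f' :: "real \<Rightarrow> real"
  assumes "a \<le> b" and cont: "continuous_on {a..b} f" and "0 < f b"
    and deriv: "\<And>x. a \<le> x \<Longrightarrow> x < b \<Longrightarrow> (f has_real_derivative f' x) (at x)"
    and neg: "\<And>x. a \<le> x \<Longrightarrow> x < b \<Longrightarrow> f x \<le> 0 \<Longrightarrow> f' x < 0"
  shows "0 < f a"
proof (rule ccontr)
  assume "\<not> 0 < f a"
  define Z where "Z = {x \<in> {a..b}. f x \<le> 0}"
  have "compact Z"
    unfolding Z_def compact_eq_bounded_closed
    using continuous_on_closed_Collect_le[OF cont continuous_on_const, of 0]
    by (auto intro: bounded_subset[OF bounded_closed_interval])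
  moreover have "a \<in> Z"
    using \<open>\<not> 0 < f a\<close> \<open>a \<le> b\<close> by (simp add: Z_def)
  ultimately obtain z where z: "z \<in> Z" and z_max: "\<And>x. x \<in> Z \<Longrightarrow> x \<le> z"
    using compact_attains_sup[of Z] by blast
  have "a \<le> z" "z \<le> b" "f z \<le> 0"
    using z by (auto simp: Z_def)
  moreover have "z \<noteq> b"
    using \<open>f z \<le> 0\<close> \<open>0 < f b\<close> by auto
  ultimately have "z < b" by simp
  have "(f has_real_derivative f' z) (at z)" "f' z < 0"
    using deriv neg \<open>a \<le> z\<close> \<open>z < b\<close> \<open>f z \<le> 0\<close> by simp_all
  then obtain d where "0 < d" and d: "\<And>h. 0 < h \<Longrightarrow> h < d \<Longrightarrow> f (z + h) < f z"
    using DERIV_neg_dec_right by blast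
  obtain h where "0 < h" "h < d" "h < b - z"
    using field_lbound_gt_zero[of d "b - z"] \<open>0 < d\<close> \<open>z < b\<close> by auto
  then have "z + h \<in> Z"
    using d[of h] \<open>a \<le> z\<close> \<open>f z \<le> 0\<close> by (simp add: Z_def)
  then show False
    using z_max \<open>0 < h\<close> by fastforce
qed

lemma linear_ode_zero:
  fixes f :: "real \<Rightarrow> real"
  assumes "a \<le> b" and cont: "continuous_on {a..b} f" and "f a = 0"
    and deriv: "\<And>t. a < t \<Longrightarrow> t < b \<Longrightarrow> (f has_real_derivative - c * f t) (at t)"
  shows "f b = 0"
proof (cases "a = b")
  case False
  define H where "H t = exp (c * t) * f t" for t
  have "H b = H a"
  proof (rule DERIV_isconst_end[of a b H])
    show "continuous_on {a..b} H"
      unfolding H_def by (intro continuous_intros cont)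
    fix t assume "a < t" "t < b"
    have "(H has_real_derivative c * exp (c * t) * f t + (- c * f t) * exp (c * t)) (at t)"
      unfolding H_def[abs_def]
      by (intro DERIV_mult deriv \<open>a < t\<close> \<open>t < b\<close>) (auto intro!: derivative_eq_intros)
    then show "(H has_real_derivative 0) (at t)"
      by (simp add: algebra_simps)
  qed (use \<open>a \<le> b\<close> False in simp)
  then show ?thesis
    using \<open>f a = 0\<close> by (simp add: H_def)
qed (use \<open>f a = 0\<close> in simp)

lemma tendsto_zero_attains_max:
  fixes f :: "real \<Rightarrow> real"
  assumes cont: "\<And>T. 0 \<le> T \<Longrightarrow> continuous_on {0..T} f" and lim: "(f \<longlongrightarrow> 0) at_top"
    and "0 \<le> t\<^sub>0" "0 < f t\<^sub>0"
  shows "\<exists>T\<ge>0. \<forall>t\<ge>0. f t \<le> f T"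
proof -
  obtain M where M: "\<And>t. M \<le> t \<Longrightarrow> f t < f t\<^sub>0"
    using order_tendstoD(2)[OF lim \<open>0 < f t\<^sub>0\<close>] by (auto simp: eventually_at_top_linorder)
  define M' where "M' = max M t\<^sub>0"
  have "\<exists>T\<in>{0..M'}. \<forall>t\<in>{0..M'}. f t \<le> f T"
    using \<open>0 \<le> t\<^sub>0\<close> by (intro continuous_attains_sup cont) (auto simp: M'_def le_max_iff_disj)
  then obtain T where T: "T \<in> {0..M'}" and T_max: "\<And>t. t \<in> {0..M'} \<Longrightarrow> f t \<le> f T"
    by blast
  have "f t \<le> f T" if "0 \<le> t" for t
  proof (cases "t \<le> M'")
    case False
    then have "f t < f t\<^sub>0" using M by (simp add: M'_def)
    also have "f t\<^sub>0 \<le> f T" using T_max \<open>0 \<le> t\<^sub>0\<close> by (simp add: M'_def)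
    finally show ?thesis by simp
  qed (use T_max that in simp)
  then show ?thesis
    using T by auto
qed

locale unbounded_integral =
  fixes l r :: real and g :: "real \<Rightarrow> real"
  assumes l_less_r: "l < r"
    and g_cont: "continuous_on {l<..r} g"
    and g_pos: "\<And>x. l < x \<Longrightarrow> x \<le> r \<Longrightarrow> 0 < g x"
    and unbounded: "\<And>t. \<exists>a\<in>{l<..r}. t \<le> integral {a..r} g"
begin

definition Phi :: "real \<Rightarrow> real" where
  "Phi u = integral {u..r} g"

definition Phi_inv :: "real \<Rightarrow> real" where
  "Phi_inv = inv_into {l<..r} Phi"

lemma g_continuous_on_Icc: "l < a \<Longrightarrow> continuous_on {a..r} g"
  by (rule continuous_on_subset[OF g_cont]) auto

lemma Phi_continuous_on: "l < a \<Longrightarrow> continuous_on {a..r} Phi"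
  unfolding Phi_def[abs_def]
  by (intro indefinite_integral_continuous_1' integrable_continuous_interval g_continuous_on_Icc)

lemma Phi_deriv: "l < x \<Longrightarrow> x < r \<Longrightarrow> (Phi has_real_derivative - g x) (at x)"
  unfolding Phi_def[abs_def]
  by (rule has_real_derivative_integral_lower[OF g_continuous_on_Icc[of "(l + x) / 2"]]) auto

lemma Phi_r [simp]: "Phi r = 0"
  by (simp add: Phi_def)

lemma Phi_strict_antimono:
  assumes "l < u" "u < v" "v \<le> r"
  shows "Phi v < Phi u"
proof (rule DERIV_neg_imp_decreasing_open[OF \<open>u < v\<close>])
  show "continuous_on {u..v} Phi"
    using Phi_continuous_on[OF \<open>l < u\<close>] by (rule continuous_on_subset) (use assms in auto)
  fix x assume "u < x" "x < v"
  then show "\<exists>y. (Phi has_real_derivative y) (at x) \<and> y < 0"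
    using Phi_deriv g_pos assms by force
qed

lemma Phi_antimono: "l < u \<Longrightarrow> u \<le> v \<Longrightarrow> v \<le> r \<Longrightarrow> Phi v \<le> Phi u"
  using Phi_strict_antimono[of u v] by (cases "u = v") auto

lemma Phi_nonneg: "l < u \<Longrightarrow> u \<le> r \<Longrightarrow> 0 \<le> Phi u"
  using Phi_antimono[of u r] by simp

lemma inj_on_Phi: "inj_on Phi {l<..r}"
  by (rule inj_onI) (metis Phi_strict_antimono greaterThanAtMost_iff linorder_neqE_linordered_idom order.irrefl)

lemma Phi_image:
  assumes "l < a" "a \<le> r"
  shows "Phi ` {a..r} = {0..Phi a}"
proof
  show "Phi ` {a..r} \<subseteq> {0..Phi a}"
    using Phi_nonneg Phi_antimono assms by fastforce
  show "{0..Phi a} \<subseteq> Phi ` {a..r}"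
  proof
    fix t assume "t \<in> {0..Phi a}"
    then have "\<exists>x. a \<le> x \<and> x \<le> r \<and> Phi x = t"
      using assms Phi_continuous_on[OF \<open>l < a\<close>] by (intro IVT2') auto
    then show "t \<in> Phi ` {a..r}" by force
  qed
qed

lemma nonneg_in_range_Phi:
  assumes "0 \<le> t"
  shows "t \<in> Phi ` {l<..r}"
proof -
  obtain a where a: "l < a" "a \<le> r" "t \<le> Phi a"
    using unbounded[of t] by (auto simp: Phi_def)
  then have "t \<in> Phi ` {a..r}"
    using Phi_image assms by auto
  then show ?thesis
    using a by auto
qed

lemma Phi_inv_mem: "0 \<le> t \<Longrightarrow> Phi_inv t \<in> {l<..r}"
  unfolding Phi_inv_def by (rule inv_into_into[OF nonneg_in_range_Phi])

lemma Phi_Phi_inv: "0 \<le> t \<Longrightarrow> Phi (Phi_inv t) = t"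
  unfolding Phi_inv_def by (rule f_inv_into_f[OF nonneg_in_range_Phi])

lemma Phi_inv_Phi: "l < u \<Longrightarrow> u \<le> r \<Longrightarrow> Phi_inv (Phi u) = u"
  unfolding Phi_inv_def by (rule inv_into_f_f[OF inj_on_Phi]) simp

lemma Phi_inv_0 [simp]: "Phi_inv 0 = r"
  using Phi_inv_Phi[of r] l_less_r by simp

lemma Phi_inv_antimono:
  assumes "0 \<le> s" "s \<le> t"
  shows "Phi_inv t \<le> Phi_inv s"
proof (rule ccontr)
  assume "\<not> Phi_inv t \<le> Phi_inv s"
  then have "Phi (Phi_inv t) < Phi (Phi_inv s)"
    using Phi_strict_antimono Phi_inv_mem assms by force
  then show False
    using Phi_Phi_inv assms by simp
qed

lemma Phi_inv_less: "0 < t \<Longrightarrow> Phi_inv t < r"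
  using Phi_inv_mem[of t] Phi_Phi_inv[of t] by (cases "Phi_inv t = r") auto

lemma Phi_inv_image_subset: "0 \<le> T \<Longrightarrow> Phi_inv ` {0..T} \<subseteq> {Phi_inv T..r}"
  using Phi_inv_antimono Phi_inv_mem by force

lemma Phi_inv_continuous_on:
  assumes "0 \<le> T"
  shows "continuous_on {0..T} Phi_inv"
proof -
  have a: "l < Phi_inv T" "Phi_inv T \<le> r"
    using Phi_inv_mem[OF assms] by auto
  have "continuous_on (Phi ` {Phi_inv T..r}) Phi_inv"
    using a Phi_inv_Phi by (intro continuous_on_inv Phi_continuous_on) auto
  then show ?thesis
    using Phi_image[OF a] Phi_Phi_inv[OF assms] by simp
qed

lemma Phi_inv_deriv:
  assumes "0 < t"
  shows "(Phi_inv has_real_derivative - 1 / g (Phi_inv t)) (at t)"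
proof -
  have u: "l < Phi_inv t" "Phi_inv t < r"
    using Phi_inv_mem[of t] Phi_inv_less[of t] assms by auto
  have "isCont Phi_inv t"
    using Phi_inv_continuous_on[of "t + 1"] assms
    by (intro continuous_on_interior[of "{0..t + 1}"]) auto
  have "(Phi_inv has_real_derivative inverse (- g (Phi_inv t))) (at t)"
  proof (rule DERIV_inverse_function[where a = 0 and b = "t + 1"])
    show "(Phi has_real_derivative - g (Phi_inv t)) (at (Phi_inv t))"
      using Phi_deriv u by simp
    show "- g (Phi_inv t) \<noteq> 0"
      using g_pos u by force
    show "\<And>y. 0 < y \<Longrightarrow> y < t + 1 \<Longrightarrow> Phi (Phi_inv y) = y"
      using Phi_Phi_inv by simp
  qed (use assms \<open>isCont Phi_inv t\<close> in auto)
  then show ?thesis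
    by (simp add: divide_inverse)
qed

lemma Phi_inv_tendsto: "(Phi_inv \<longlongrightarrow> l) at_top"
proof (rule order_tendstoI)
  fix y assume "y < l"
  then show "\<forall>\<^sub>F t in at_top. y < Phi_inv t"
    using Phi_inv_mem by (auto simp: eventually_at_top_linorder intro!: exI[of _ 0] less_trans[of y l])
next
  fix y assume "l < y"
  obtain v where v: "l < v" "v \<le> r" "v < y"
    using dense[of l "min y r"] \<open>l < y\<close> l_less_r by auto
  have "Phi_inv t < y" if "Phi v \<le> t" for t
    using Phi_inv_antimono[of "Phi v" t] Phi_inv_Phi[OF v(1,2)] Phi_nonneg[OF v(1,2)] that v(3)
    by simp
  then show "\<forall>\<^sub>F t in at_top. Phi_inv t < y"
    by (auto simp: eventually_at_top_linorder)
qed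

end

locale seir =
  fixes \<beta> \<gamma> \<delta> S E I R N \<alpha> u0 uinf :: real
    and \<psi> \<psi>' :: "real \<Rightarrow> real"
  assumes pos: "\<beta> > 0" "\<gamma> > 0" "\<delta> > 0"
    and N_def: "N = S + E + I + R"
    and A1: "I > 0"
    and A2: "E > (\<gamma>/\<delta>) * I"
    and A3: "S > \<delta> * E / (\<beta> * I)"
    and alpha: "R < \<alpha>" "\<alpha> = N - S * exp ((\<beta>/\<gamma>) * R) * exp (- (\<beta>/\<gamma>) * \<alpha>)"
    and A5: "S < (\<gamma>/\<beta>) * exp ((\<beta>/\<gamma>) * (\<alpha> - R))"
    and u0_def: "u0 = exp (- (\<beta>/\<gamma>) * R)"
    and uinf_def: "uinf = exp (- (\<beta>/\<gamma>) * \<alpha>)"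
    and psi_cont: "continuous_on {uinf<..u0} \<psi>"
    and psi_pos: "\<And>u. uinf < u \<Longrightarrow> u \<le> u0 \<Longrightarrow> 0 < \<psi> u"
    and psi_deriv: "\<And>u. uinf < u \<Longrightarrow> u < u0 \<Longrightarrow> (\<psi> has_real_derivative \<psi>' u) (at u)"
    and psi_ode: "\<And>u. uinf < u \<Longrightarrow> u < u0 \<Longrightarrow>
        \<psi>' u * \<psi> u - ((\<gamma> + \<delta>) / u) * \<psi> u
          = - \<delta> * (\<beta> * N - \<beta> * S * exp ((\<beta>/\<gamma>) * R) * u + \<gamma> * ln u) / u"
    and psi_init: "\<psi> u0 = \<beta> * I"
begin

abbreviation C :: real where
  "C \<equiv> S * exp ((\<beta>/\<gamma>) * R)"

text \<open>Along a trajectory \<open>u = exp (- (\<beta>/\<gamma>) * R(t))\<close> we have \<open>S(t) = C * u\<close> and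
  \<open>R(t) = - (\<gamma>/\<beta>) * ln u\<close>, so \<open>F u\<close> is \<open>E(t) + I(t)\<close>.\<close>
definition F :: "real \<Rightarrow> real" where
  "F u = N - C * u + (\<gamma>/\<beta>) * ln u"

definition K :: real where
  "K = \<gamma> / (\<beta> * uinf) - C"

lemma E_pos: "0 < E"
  using A1 A2 pos by (smt (verit) divide_pos_pos mult_pos_pos)

lemma S_pos: "0 < S"
  using A1 A3 E_pos pos by (smt (verit) divide_pos_pos mult_pos_pos)

lemma uinf_pos: "0 < uinf"
  by (simp add: uinf_def)

lemma uinf_less_u0: "uinf < u0"
proof -
  have "(\<beta>/\<gamma>) * R < (\<beta>/\<gamma>) * \<alpha>"
    using pos alpha(1) by (intro mult_strict_left_mono) simp_all
  then show ?thesis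
    by (simp add: uinf_def u0_def)
qed

lemma F_uinf: "F uinf = 0"
proof -
  have "C * uinf = N - \<alpha>"
    using alpha(2) by (simp add: uinf_def)
  moreover have "(\<gamma>/\<beta>) * ln uinf = - \<alpha>"
    using pos by (simp add: uinf_def)
  ultimately show ?thesis
    by (simp add: F_def)
qed

lemma F_u0: "F u0 = E + I"
proof -
  have "C * u0 = S"
    by (simp add: u0_def mult_exp_exp)
  moreover have "(\<gamma>/\<beta>) * ln u0 = - R"
    using pos by (simp add: u0_def)
  ultimately show ?thesis
    unfolding F_def using N_def by linarith
qed

lemma K_pos: "0 < K"
proof -
  have "(\<beta>/\<gamma>) * (\<alpha> - R) + (\<beta>/\<gamma>) * R + - (\<beta>/\<gamma>) * \<alpha> = 0"
    by (simp only: right_diff_distrib)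
  then have "exp ((\<beta>/\<gamma>) * (\<alpha> - R)) * (C * uinf) = S"
    by (metis (no_types, lifting) exp_add exp_zero mult.commute mult.left_commute mult_1 uinf_def)
  then have "C * uinf < \<gamma> / \<beta>"
    using A5 by (metis exp_gt_zero mult.commute mult_less_cancel_left_pos)
  then show ?thesis
    using pos uinf_pos by (simp add: K_def field_simps)
qed

lemma F_le_linear:
  assumes "uinf < u"
  shows "F u \<le> K * (u - uinf)"
proof -
  have "ln (u / uinf) \<le> u / uinf - 1"
    using assms uinf_pos by (intro ln_le_minus_one) simp
  then have "(\<gamma>/\<beta>) * (ln u - ln uinf) \<le> (\<gamma>/\<beta>) * (u / uinf - 1)"
    using assms uinf_pos pos by (intro mult_left_mono) (simp_all add: ln_div)
  moreover have "F u = - C * (u - uinf) + (\<gamma>/\<beta>) * (ln u - ln uinf)"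
    using F_uinf by (simp add: F_def algebra_simps)
  moreover have "K * (u - uinf) = - C * (u - uinf) + (\<gamma>/\<beta>) * (u / uinf - 1)"
    using uinf_pos by (simp add: K_def field_simps)
  ultimately show ?thesis
    by linarith
qed

lemma F_deriv: "0 < u \<Longrightarrow> (F has_real_derivative (\<gamma>/\<beta>) / u - C) (at u)"
  unfolding F_def[abs_def] using pos by (auto intro!: derivative_eq_intros simp: field_simps)

lemma F_continuous_on: "0 < a \<Longrightarrow> continuous_on {a..b} F"
  unfolding F_def[abs_def] by (intro continuous_intros) auto

lemma psi'_eq:
  assumes "u \<in> {uinf<..<u0}"
  shows "\<psi>' u = (\<gamma> + \<delta>) / u - \<delta> * \<beta> * F u / (u * \<psi> u)"
proof -
  have "\<psi> u > 0" "u > 0"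
    using assms uinf_pos by (auto intro: psi_pos)
  moreover have "\<beta> * F u = \<beta> * N - \<beta> * S * exp ((\<beta>/\<gamma>) * R) * u + \<gamma> * ln u"
    using pos by (simp add: F_def field_simps)
  then have "\<psi>' u * \<psi> u - ((\<gamma> + \<delta>) / u) * \<psi> u = - \<delta> * (\<beta> * F u) / u"
    using psi_ode assms by simp
  ultimately show ?thesis
    by (simp add: field_simps)
qed

text \<open>Where \<open>\<psi> \<ge> \<beta> * F\<close>, the equation gives \<open>\<psi>' \<ge> \<gamma> / u\<close>, so \<open>\<beta> * F - \<psi>\<close> has slope at
  most \<open>- \<beta> * C < 0\<close> there; as \<open>\<beta> * F - \<psi>\<close> is positive at \<open>u0\<close>, it stays positive.\<close>
lemma psi_less_F:
  assumes "uinf < v" "v \<le> u0"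
  shows "\<psi> v < \<beta> * F v"
proof -
  have "0 < \<beta> * F v - \<psi> v"
  proof (rule pos_if_deriv_neg_where_nonpos[OF \<open>v \<le> u0\<close>])
    show "continuous_on {v..u0} (\<lambda>x. \<beta> * F x - \<psi> x)"
      using assms uinf_pos
      by (intro continuous_intros F_continuous_on continuous_on_subset[OF psi_cont]) auto
    show "0 < \<beta> * F u0 - \<psi> u0"
      using E_pos pos by (simp add: F_u0 psi_init algebra_simps)
    fix x assume x: "v \<le> x" "x < u0"
    then have x_in: "x \<in> {uinf<..<u0}"
      using assms by auto
    then have "0 < x"
      using uinf_pos by simp
    show "((\<lambda>x. \<beta> * F x - \<psi> x) has_real_derivative
        \<beta> * ((\<gamma>/\<beta>) / x - C) - \<psi>' x) (at x)"
      using psi_deriv x_in by (intro DERIV_diff DERIV_cmult F_deriv \<open>0 < x\<close>) auto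
    assume "\<beta> * F x - \<psi> x \<le> 0"
    moreover have "0 < \<psi> x"
      using x_in by (auto intro: psi_pos)
    ultimately have "\<delta> * \<beta> * F x / (x * \<psi> x) \<le> \<delta> / x"
      using \<open>0 < x\<close> pos by (simp add: divide_simps mult_left_mono)
    moreover have "\<beta> * ((\<gamma>/\<beta>) / x - C) = \<gamma> / x - \<beta> * C"
      using pos by (simp add: field_simps)
    moreover have "\<psi>' x = \<gamma> / x + \<delta> / x - \<delta> * \<beta> * F x / (x * \<psi> x)"
      by (simp add: psi'_eq[OF x_in] add_divide_distrib)
    ultimately have "\<beta> * ((\<gamma>/\<beta>) / x - C) - \<psi>' x \<le> - \<beta> * C"
      by linarith
    also have "\<dots> < 0"
      using S_pos pos by simp
    finally show "\<beta> * ((\<gamma>/\<beta>) / x - C) - \<psi>' x < 0" .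
  qed
  then show ?thesis
    by simp
qed

lemma psi_less_linear:
  assumes "uinf < v" "v \<le> u0"
  shows "\<psi> v < \<beta> * K * (v - uinf)"
proof -
  have "\<beta> * F v \<le> \<beta> * (K * (v - uinf))"
    using F_le_linear[OF assms(1)] pos by simp
  then show ?thesis
    using psi_less_F[OF assms] by simp
qed

sublocale phi: unbounded_integral uinf u0 "\<lambda>\<xi>. 1 / (\<xi> * \<psi> \<xi>)"
  rewrites "unbounded_integral.Phi u0 (\<lambda>\<xi>. 1 / (\<xi> * \<psi> \<xi>)) = phiF \<psi> u0"
    and "unbounded_integral.Phi_inv uinf u0 (\<lambda>\<xi>. 1 / (\<xi> * \<psi> \<xi>)) = phiInv \<psi> uinf u0"
proof -
  have "\<xi> * \<psi> \<xi> \<noteq> 0" if "uinf < \<xi>" "\<xi> \<le> u0" for \<xi>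
    using that uinf_pos psi_pos[OF that] by simp
  then have g_cont: "continuous_on {uinf<..u0} (\<lambda>\<xi>. 1 / (\<xi> * \<psi> \<xi>))"
    by (intro continuous_intros psi_cont) auto
  show "unbounded_integral uinf u0 (\<lambda>\<xi>. 1 / (\<xi> * \<psi> \<xi>))"
  proof
    show "uinf < u0" by (rule uinf_less_u0)
    show "continuous_on {uinf<..u0} (\<lambda>\<xi>. 1 / (\<xi> * \<psi> \<xi>))" by (rule g_cont)
    show "0 < 1 / (x * \<psi> x)" if "uinf < x" "x \<le> u0" for x
      using that psi_pos uinf_pos by simp
    show "\<exists>a\<in>{uinf<..u0}. t \<le> integral {a..u0} (\<lambda>\<xi>. 1 / (\<xi> * \<psi> \<xi>))" for t
    proof (rule integral_unbounded_if_ge_reciprocal[OF uinf_less_u0])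
      show "0 < 1 / (u0 * (\<beta> * K))"
        using uinf_less_u0 uinf_pos K_pos pos by simp
      show "continuous_on {a..u0} (\<lambda>\<xi>. 1 / (\<xi> * \<psi> \<xi>))" if "uinf < a" for a
        using g_cont by (rule continuous_on_subset) (use that in auto)
      fix x assume x: "uinf < x" "x \<le> u0"
      then have "0 < \<psi> x"
        using psi_pos by simp
      then have "x * \<psi> x \<le> u0 * (\<beta> * K * (x - uinf))"
        using psi_less_linear[OF x] x uinf_pos K_pos pos
        by (intro mult_mono) auto
      then show "1 / (u0 * (\<beta> * K)) / (x - uinf) \<le> 1 / (x * \<psi> x)"
        using x psi_pos uinf_pos by (simp add: frac_le)
    qed
  qed
  then interpret unbounded_integral uinf u0 "\<lambda>\<xi>. 1 / (\<xi> * \<psi> \<xi>)" .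
  show "Phi = phiF \<psi> u0"
    by (simp add: fun_eq_iff Phi_def phiF_def)
  show "Phi_inv = phiInv \<psi> uinf u0"
    by (simp add: fun_eq_iff Phi_inv_def phiInv_def Phi_def[abs_def] phiF_def[abs_def])
qed

abbreviation P :: "real \<Rightarrow> real" where
  "P \<equiv> phiInv \<psi> uinf u0"

abbreviation infected :: "real \<Rightarrow> real" where
  "infected \<equiv> Ifun \<beta> \<gamma> \<delta> S E R N \<psi> uinf u0"

definition J :: "real \<Rightarrow> real" where
  "J x = integral {x..u0} (\<lambda>v. exp (\<delta> * phiF \<psi> u0 v))"

lemma infected_eq: "infected t = F (P t) - E * exp (- \<delta> * t) - C * exp (- \<delta> * t) * J (P t)"
  by (simp add: Ifun_def F_def J_def)

lemma P_mem_open: "0 < t \<Longrightarrow> P t \<in> {uinf<..<u0}"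
  using phi.Phi_inv_mem[of t] phi.Phi_inv_less[of t] by auto

lemma P_deriv: "0 < t \<Longrightarrow> (P has_real_derivative - (P t * \<psi> (P t))) (at t)"
  using phi.Phi_inv_deriv[of t] by simp

lemma continuous_on_comp_P:
  assumes "0 \<le> T" and f: "\<And>a. uinf < a \<Longrightarrow> continuous_on {a..u0} f"
  shows "continuous_on {0..T} (\<lambda>t. f (P t))"
  using phi.Phi_inv_mem[OF assms(1)]
  by (intro continuous_on_compose2[OF f phi.Phi_inv_continuous_on phi.Phi_inv_image_subset]) (use assms in auto)

lemma J_continuous_on: "uinf < a \<Longrightarrow> continuous_on {a..u0} J"
  unfolding J_def[abs_def]
  by (intro indefinite_integral_continuous_1' integrable_continuous_interval continuous_intros phi.Phi_continuous_on)

lemma J_deriv: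
  assumes "uinf < x" "x < u0"
  shows "(J has_real_derivative - exp (\<delta> * phiF \<psi> u0 x)) (at x)"
  unfolding J_def[abs_def]
proof (rule has_real_derivative_integral_lower)
  show "continuous_on {(uinf + x) / 2..u0} (\<lambda>v. exp (\<delta> * phiF \<psi> u0 v))"
    using assms by (intro continuous_intros phi.Phi_continuous_on) simp
qed (use assms in auto)

lemma JP_deriv:
  assumes "0 < t"
  shows "((\<lambda>t. J (P t)) has_real_derivative exp (\<delta> * t) * (P t * \<psi> (P t))) (at t)"
proof -
  have "((\<lambda>t. J (P t)) has_real_derivative
      - exp (\<delta> * phiF \<psi> u0 (P t)) * - (P t * \<psi> (P t))) (at t)"
    using P_mem_open[OF assms] by (intro DERIV_chain2[OF J_deriv P_deriv[OF assms]]) auto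
  then show ?thesis
    using phi.Phi_Phi_inv[of t] assms by simp
qed

lemma FP_deriv:
  assumes "0 < t"
  shows "((\<lambda>t. F (P t)) has_real_derivative C * P t * \<psi> (P t) - (\<gamma>/\<beta>) * \<psi> (P t)) (at t)"
proof -
  have "0 < P t"
    using P_mem_open[OF assms] uinf_pos by simp
  then have "((\<lambda>t. F (P t)) has_real_derivative ((\<gamma>/\<beta>) / P t - C) * - (P t * \<psi> (P t))) (at t)"
    by (intro DERIV_chain2[OF F_deriv P_deriv[OF assms]])
  then show ?thesis
    using \<open>0 < P t\<close> by (simp add: algebra_simps)
qed

lemma psiP_deriv:
  assumes "0 < t"
  shows "((\<lambda>t. \<psi> (P t)) has_real_derivative - (\<gamma> + \<delta>) * \<psi> (P t) + \<delta> * \<beta> * F (P t)) (at t)"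
proof -
  have u: "P t \<in> {uinf<..<u0}"
    by (rule P_mem_open[OF assms])
  then have "((\<lambda>t. \<psi> (P t)) has_real_derivative \<psi>' (P t) * - (P t * \<psi> (P t))) (at t)"
    using psi_deriv by (intro DERIV_chain2[OF _ P_deriv[OF assms]]) auto
  moreover have "0 < P t" "0 < \<psi> (P t)"
    using u uinf_pos by (auto intro: psi_pos)
  then have "\<psi>' (P t) * - (P t * \<psi> (P t)) = - (\<gamma> + \<delta>) * \<psi> (P t) + \<delta> * \<beta> * F (P t)"
    by (simp add: psi'_eq[OF u] field_simps less_imp_neq[symmetric])
  ultimately show ?thesis
    by (rule DERIV_cong)
qed

lemma infected_deriv_ode:
  assumes "0 < t"
  shows "(infected has_real_derivative - (\<gamma>/\<beta>) * \<psi> (P t) + \<delta> * (F (P t) - infected t)) (at t)"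
proof -
  have infected_fun: "infected = (\<lambda>t. F (P t) - E * exp (- \<delta> * t) - C * exp (- \<delta> * t) * J (P t))"
    by (simp add: fun_eq_iff infected_eq)
  have exp_deriv: "((\<lambda>t. exp (- \<delta> * t)) has_real_derivative - \<delta> * exp (- \<delta> * t)) (at t)"
    by (auto intro!: derivative_eq_intros)
  have "(infected has_real_derivative
      (C * P t * \<psi> (P t) - (\<gamma>/\<beta>) * \<psi> (P t)) - E * (- \<delta> * exp (- \<delta> * t))
      - (C * (- \<delta> * exp (- \<delta> * t)) * J (P t)
         + exp (\<delta> * t) * (P t * \<psi> (P t)) * (C * exp (- \<delta> * t)))) (at t)"
    unfolding infected_fun
    by (intro DERIV_diff DERIV_mult DERIV_cmult FP_deriv JP_deriv exp_deriv assms)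
  moreover have "exp (\<delta> * t) * exp (- \<delta> * t) = 1"
    by (simp flip: exp_add)
  then have "(C * P t * \<psi> (P t) - (\<gamma>/\<beta>) * \<psi> (P t)) - E * (- \<delta> * exp (- \<delta> * t))
      - (C * (- \<delta> * exp (- \<delta> * t)) * J (P t)
         + exp (\<delta> * t) * (P t * \<psi> (P t)) * (C * exp (- \<delta> * t)))
      = - (\<gamma>/\<beta>) * \<psi> (P t) + \<delta> * (F (P t) - infected t)"
    by (simp add: infected_eq algebra_simps)
  ultimately show ?thesis
    by (rule DERIV_cong)
qed

lemma infected_continuous_on: "0 \<le> T \<Longrightarrow> continuous_on {0..T} infected"
  unfolding infected_eq[abs_def]
  by (intro continuous_intros continuous_on_comp_P F_continuous_on J_continuous_on)
     (use uinf_pos in auto)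

lemma psiP_continuous_on: "0 \<le> T \<Longrightarrow> continuous_on {0..T} (\<lambda>t. \<psi> (P t))"
  by (intro continuous_on_comp_P continuous_on_subset[OF psi_cont]) auto

lemma infected_0: "infected 0 = I"
  by (simp add: infected_eq F_u0 J_def)

lemma infected_eq_psiP:
  assumes "0 \<le> t"
  shows "infected t = \<psi> (P t) / \<beta>"
proof -
  have "(\<lambda>s. infected s - \<psi> (P s) / \<beta>) t = 0"
  proof (rule linear_ode_zero[OF assms])
    show "continuous_on {0..t} (\<lambda>s. infected s - \<psi> (P s) / \<beta>)"
      using assms pos by (intro continuous_intros infected_continuous_on psiP_continuous_on) auto
    show "infected 0 - \<psi> (P 0) / \<beta> = 0"
      using pos by (simp add: infected_0 psi_init)
    fix s :: real assume "0 < s"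
    then have "((\<lambda>s. infected s - \<psi> (P s) / \<beta>) has_real_derivative
        (- (\<gamma>/\<beta>) * \<psi> (P s) + \<delta> * (F (P s) - infected s))
        - (- (\<gamma> + \<delta>) * \<psi> (P s) + \<delta> * \<beta> * F (P s)) / \<beta>) (at s)"
      by (intro DERIV_diff DERIV_cdivide infected_deriv_ode psiP_deriv)
    moreover have "(- (\<gamma>/\<beta>) * \<psi> (P s) + \<delta> * (F (P s) - infected s))
        - (- (\<gamma> + \<delta>) * \<psi> (P s) + \<delta> * \<beta> * F (P s)) / \<beta>
        = - \<delta> * (infected s - \<psi> (P s) / \<beta>)"
      using pos by (simp add: field_simps)
    ultimately show "((\<lambda>s. infected s - \<psi> (P s) / \<beta>) has_real_derivative
        - \<delta> * (infected s - \<psi> (P s) / \<beta>)) (at s)"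
      by (rule DERIV_cong)
  qed
  then show ?thesis
    by simp
qed

lemma infected_pos: "0 \<le> t \<Longrightarrow> 0 < infected t"
  using phi.Phi_inv_mem[of t] pos by (simp add: infected_eq_psiP psi_pos)

lemma infected_tendsto_0: "(infected \<longlongrightarrow> 0) at_top"
proof (rule tendsto_sandwich)
  show "\<forall>\<^sub>F t in at_top. 0 \<le> infected t"
    using infected_pos by (auto simp: eventually_at_top_linorder intro!: exI[of _ 0] less_imp_le)
  show "\<forall>\<^sub>F t in at_top. infected t \<le> K * (P t - uinf)"
  proof (rule eventually_at_top_linorderI[of 0])
    fix t :: real assume "0 \<le> t"
    then show "infected t \<le> K * (P t - uinf)"
      using psi_less_linear[of "P t"] phi.Phi_inv_mem[of t] pos
      by (simp add: infected_eq_psiP pos_divide_le_eq mult_ac)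
  qed
  show "((\<lambda>t. K * (P t - uinf)) \<longlongrightarrow> 0) at_top"
    using tendsto_mult_right_zero[OF LIM_zero[OF phi.Phi_inv_tendsto]] .
qed simp

lemma infected_deriv:
  assumes "0 < T"
  shows "(infected has_real_derivative
      - ((\<gamma> + \<delta>)/\<beta>) * \<psi> (P T) + \<delta> * F (P T)) (at T)"
  using infected_deriv_ode[OF assms]
  by (rule DERIV_cong) (use assms pos in \<open>simp add: infected_eq_psiP field_simps\<close>)

lemma infected_has_max:
  "\<exists>T\<^sub>2>0. (infected has_real_derivative 0) (at T\<^sub>2) \<and> (\<forall>t\<ge>0. infected t \<le> infected T\<^sub>2)"
proof -
  define D where "D T = - ((\<gamma> + \<delta>)/\<beta>) * \<psi> (P T) + \<delta> * F (P T)" for T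
  have "continuous_on {0..1} D"
    unfolding D_def using uinf_pos
    by (intro continuous_intros continuous_on_comp_P F_continuous_on psiP_continuous_on) auto
  then have "(D \<longlongrightarrow> D 0) (at_right 0)"
    by (rule continuous_on_Icc_at_rightD) simp
  moreover have "0 < D 0"
    using A2 pos by (simp add: D_def psi_init F_u0 field_simps)
  ultimately have "\<forall>\<^sub>F x in at_right 0. 0 < D x"
    by (rule order_tendstoD(1))
  then obtain T\<^sub>1 where "0 < T\<^sub>1" and D_pos: "\<And>x. 0 < x \<Longrightarrow> x < T\<^sub>1 \<Longrightarrow> 0 < D x"
    by (auto simp: eventually_at_right_field)
  have "infected 0 < infected T\<^sub>1"
  proof (rule DERIV_pos_imp_increasing_open[OF \<open>0 < T\<^sub>1\<close>])
    fix x assume "0 < x" "x < T\<^sub>1"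
    then show "\<exists>y. (infected has_real_derivative y) (at x) \<and> 0 < y"
      using infected_deriv[of x] D_pos[of x] by (auto simp: D_def)
  qed (use \<open>0 < T\<^sub>1\<close> infected_continuous_on in simp)
  then obtain T\<^sub>2 where "0 \<le> T\<^sub>2" and T\<^sub>2_max: "\<forall>t\<ge>0. infected t \<le> infected T\<^sub>2"
    using tendsto_zero_attains_max[OF infected_continuous_on infected_tendsto_0, of T\<^sub>1]
      infected_pos[of T\<^sub>1] \<open>0 < T\<^sub>1\<close> by auto
  have "infected T\<^sub>1 \<le> infected T\<^sub>2"
    using T\<^sub>2_max \<open>0 < T\<^sub>1\<close> by simp
  then have "T\<^sub>2 \<noteq> 0"
    using \<open>infected 0 < infected T\<^sub>1\<close> by auto
  then have "0 < T\<^sub>2"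
    using \<open>0 \<le> T\<^sub>2\<close> by simp
  have "D T\<^sub>2 = 0"
    using T\<^sub>2_max \<open>0 < T\<^sub>2\<close>
    by (intro DERIV_local_max[OF infected_deriv[OF \<open>0 < T\<^sub>2\<close>, folded D_def] \<open>0 < T\<^sub>2\<close>]) auto
  then show ?thesis
    using infected_deriv[OF \<open>0 < T\<^sub>2\<close>] \<open>0 < T\<^sub>2\<close> T\<^sub>2_max by (auto simp: D_def)
qed

end

theorem theorem10:
  fixes \<beta> \<gamma> \<delta> S E I R N \<alpha> u0 uinf :: real
    and \<psi> \<psi>' :: "real \<Rightarrow> real"
  assumes pos: "\<beta> > 0" "\<gamma> > 0" "\<delta> > 0"
    and N_def: "N = S + E + I + R" and Npos: "N > 0"
    and A1: "I > 0"
    and A2: "E > (\<gamma>/\<delta>) * I"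
    and A3: "S > \<delta> * E / (\<beta> * I)"
    and A4: "R \<ge> 0" "N > S * exp ((\<beta>/\<gamma>) * R) + R"
    and alpha: "R < \<alpha>" "\<alpha> < N"
      "\<alpha> = N - S * exp ((\<beta>/\<gamma>) * R) * exp (- (\<beta>/\<gamma>) * \<alpha>)"
    and A5: "S < (\<gamma>/\<beta>) * exp ((\<beta>/\<gamma>) * (\<alpha> - R))"
    and u0_def: "u0 = exp (- (\<beta>/\<gamma>) * R)"
    and uinf_def: "uinf = exp (- (\<beta>/\<gamma>) * \<alpha>)"
    and psi_cont: "continuous_on {uinf<..u0} \<psi>"
    and psi_pos: "\<forall>u\<in>{uinf<..u0}. \<psi> u > 0"
    and psi_deriv: "\<forall>u\<in>{uinf<..<u0}. (\<psi> has_real_derivative \<psi>' u) (at u)"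
    and psi'_cont: "continuous_on {uinf<..<u0} \<psi>'"
    and psi_ode: "\<forall>u\<in>{uinf<..<u0}.
        \<psi>' u * \<psi> u - ((\<gamma> + \<delta>) / u) * \<psi> u
          = - \<delta> * (\<beta> * N - \<beta> * S * exp ((\<beta>/\<gamma>) * R) * u + \<gamma> * ln u) / u"
    and psi_init: "\<psi> u0 = \<beta> * I"
  shows "((\<lambda>t. Ifun \<beta> \<gamma> \<delta> S E R N \<psi> uinf u0 t) \<longlongrightarrow> 0) at_top
    \<and> (\<forall>t\<ge>0. Ifun \<beta> \<gamma> \<delta> S E R N \<psi> uinf u0 t > 0)
    \<and> (\<forall>T>0. ((\<lambda>t. Ifun \<beta> \<gamma> \<delta> S E R N \<psi> uinf u0 t) has_real_derivative
          (- ((\<gamma> + \<delta>)/\<beta>) * \<psi> (phiInv \<psi> uinf u0 T)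
           + \<delta> * (N - S * exp ((\<beta>/\<gamma>) * R) * phiInv \<psi> uinf u0 T
                  + (\<gamma>/\<beta>) * ln (phiInv \<psi> uinf u0 T)))) (at T))
    \<and> (\<exists>T2>0. ((\<lambda>t. Ifun \<beta> \<gamma> \<delta> S E R N \<psi> uinf u0 t) has_real_derivative 0) (at T2)
        \<and> (\<forall>t\<ge>0. Ifun \<beta> \<gamma> \<delta> S E R N \<psi> uinf u0 t \<le> Ifun \<beta> \<gamma> \<delta> S E R N \<psi> uinf u0 T2))"
proof -
  interpret seir \<beta> \<gamma> \<delta> S E I R N \<alpha> u0 uinf \<psi> \<psi>'
    by unfold_locales (use assms in auto)
  show ?thesis
    using infected_tendsto_0 infected_pos infected_deriv infected_has_max by (simp add: F_def)
qed

end
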